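(* Let $\mathcal{G}$ be a directed graph without self-loops with vertices $v_1,\dots,v_k$, and let $A_1,\dots,A_k$ be real $2\times 2$ matrices. Suppose there exist invertible matrices $P_1,\dots,P_k$ and Jordan matrices $J_1,\dots,J_k$ with $A_i=P_iJ_iP_i^{-1}$ a Jordan decomposition of $A_i$, such that for each $(r,s)\in\mathcal{E}(\mathcal{G})$ there exists $\eta_{(r,s)}>0$ with $\Vert P_s^{-1}P_re^{\eta_{(r,s)}J_r}\Vert<1$. Then for every loop $(i_1,\dots,i_p,i_1)$ in $\mathcal{G}$, the traces of $A_{i_1},\dots,A_{i_p}$ are not all non-negative, i.e. $\operatorname{trace}(A_{i_j})<0$ for at least one $j\in\{1,\dots,p\}$.
   Context: $\mathcal{E}(\mathcal{G})$ is the set of ordered pairs $(i,j)$ such that there is a directed edge from $v_i$ to $v_j$. A loop $(i_1,\dots,i_p,i_1)$ is a sequence of vertices $v_{i_1},\dots,v_{i_p},v_{i_1}$ with a directed edge from each vertex to the next. $\Vert\cdot\Vert$ denotes the spectral norm. *)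

theory Defs
  imports "HOL-Analysis.Analysis"
begin

fun mat_pow :: "'a::semiring_1^'n^'n \<Rightarrow> nat \<Rightarrow> 'a^'n^'n" where
  "mat_pow M 0 = mat 1"
| "mat_pow M (Suc n) = M ** mat_pow M n"

definition mat_exp :: "complex^'n^'n \<Rightarrow> complex^'n^'n" where
  "mat_exp M = (\<Sum>n. (1 / fact n) *\<^sub>R mat_pow M n)"

text \<open>Spectral norm: operator norm induced by the Euclidean (Hermitian) norm on C^n.\<close>
definition spectral_norm :: "complex^'n^'n \<Rightarrow> real" where
  "spectral_norm M = onorm (\<lambda>x. M *v x)"

definition jordan_matrix2 :: "complex^2^2 \<Rightarrow> bool" where
  "jordan_matrix2 J \<longleftrightarrow>
     (\<exists>a b. J = (\<chi> i j. if i = j then (if i = 1 then a else b) else 0)) \<or>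
     (\<exists>a. J = (\<chi> i j. if i = j then a else if i = 1 \<and> j = 2 then 1 else 0))"

definition cmat :: "real^'n^'m \<Rightarrow> complex^'n^'m" where
  "cmat A = (\<chi> i j. complex_of_real (A $ i $ j))"

text \<open>A loop (i_1,...,i_p,i_1) in the digraph with edge set E, given as the list [i_1,...,i_p].\<close>
definition is_loop :: "(nat \<times> nat) set \<Rightarrow> nat list \<Rightarrow> bool" where
  "is_loop E is \<longleftrightarrow> is \<noteq> [] \<and>
     (\<forall>j < length is. (is ! j, is ! ((j + 1) mod length is)) \<in> E)"

end

theory Submission
  imports Defs
begin

text \<open>
  Let \<open>(r, s)\<close> be an edge with \<open>trace A\<^sub>r \<ge> 0\<close> and put \<open>M = P\<^sub>s\<^sup>-\<^sup>1 P\<^sub>r e\<^bsup>\<eta>J\<^sub>r\<^esup>\<close>.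
  Since \<open>J\<^sub>r\<close> is upper triangular, \<open>det e\<^bsup>\<eta>J\<^sub>r\<^esup> = e\<^bsup>\<eta> trace A\<^sub>r\<^esup>\<close> has modulus at least 1,
  while for a \<open>2\<times>2\<close> matrix \<open>|det M| \<le> \<parallel>M\<parallel>\<^sup>2 < 1\<close>. Hence \<open>|det P\<^sub>r| < |det P\<^sub>s|\<close>:
  along a loop on which all traces were non-negative, \<open>|det P\<^sub>i|\<close> would strictly increase
  all the way back to its initial value.
\<close>

lemma norm_le_sum_norm_nth: "norm (x::'a::real_normed_vector^'n) \<le> (\<Sum>i\<in>UNIV. norm (x$i))"
  unfolding norm_vec_def by (rule L2_set_le_sum) simp

lemma norm_mat_pow_nth_le:
  fixes M :: "'a::real_normed_algebra_1^'n^'n"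
  assumes "\<And>i j. norm (M$i$j) \<le> K" "0 \<le> K"
  shows "norm (mat_pow M n $ i $ j) \<le> (real CARD('n) * K)^n"
proof (induction n arbitrary: i j)
  case 0
  show ?case by (simp add: mat_def)
next
  case (Suc n)
  have "norm (mat_pow M (Suc n) $ i $ j) = norm (\<Sum>l\<in>UNIV. M$i$l * mat_pow M n $ l $ j)"
    by (simp add: matrix_matrix_mult_def)
  also have "\<dots> \<le> (\<Sum>l\<in>UNIV. norm (M$i$l) * norm (mat_pow M n $ l $ j))"
    by (intro order_trans[OF norm_sum] sum_mono norm_mult_ineq)
  also have "\<dots> \<le> (\<Sum>l\<in>(UNIV::'n set). K * (real CARD('n) * K)^n)"
    by (intro sum_mono mult_mono Suc.IH assms norm_ge_zero)
  also have "\<dots> = (real CARD('n) * K)^Suc n" by simp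
  finally show ?case .
qed

lemma summable_mat_exp: "summable (\<lambda>n. (1 / fact n) *\<^sub>R mat_pow (M::complex^'n^'n) n)"
proof -
  define c where "c = real CARD('n) * norm M"
  have entry: "norm (M$i$j) \<le> norm M" for i j
    by (rule order_trans[OF Finite_Cartesian_Product.norm_nth_le Finite_Cartesian_Product.norm_nth_le])
  have "norm (mat_pow M n) \<le> (\<Sum>i\<in>UNIV. \<Sum>j\<in>UNIV. norm (mat_pow M n $ i $ j))" for n
    by (intro order_trans[OF norm_le_sum_norm_nth] sum_mono norm_le_sum_norm_nth)
  also have "\<dots> n \<le> (\<Sum>i\<in>(UNIV::'n set). \<Sum>j\<in>(UNIV::'n set). c ^ n)" for n
    unfolding c_def by (intro sum_mono norm_mat_pow_nth_le entry norm_ge_zero)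
  finally have bound: "norm (mat_pow M n) \<le> (real CARD('n))^2 * c ^ n" for n
    by (simp add: power2_eq_square mult.assoc)
  have "norm ((1 / fact n) *\<^sub>R mat_pow M n) \<le> (real CARD('n))^2 * (c ^ n /\<^sub>R fact n)" for n
    using divide_right_mono[OF bound[of n], of "fact n"] by (simp add: divide_inverse ac_simps)
  then show ?thesis
    by (rule summable_comparison_test'[OF summable_mult[OF exp_converges[THEN sums_summable]]])
qed

lemma mat_pow_upper_triangular2:
  fixes M :: "'a::semiring_1^2^2"
  assumes "M$2$1 = 0"
  shows "mat_pow M n $2$1 = 0" "mat_pow M n $1$1 = (M$1$1)^n" "mat_pow M n $2$2 = (M$2$2)^n"
  by (induction n) (auto simp: mat_def matrix_matrix_mult_def UNIV_2 assms)

lemma det_mat_exp_upper_triangular2: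
  fixes M :: "complex^2^2"
  assumes "M$2$1 = 0"
  shows "det (mat_exp M) = exp (trace M)"
proof -
  have series: "(\<lambda>n. (1 / fact n) *\<^sub>R mat_pow M n) sums mat_exp M"
    unfolding mat_exp_def by (rule summable_sums[OF summable_mat_exp])
  have entry: "(\<lambda>n. (1 / fact n) *\<^sub>R mat_pow M n $ i $ j) sums (mat_exp M $ i $ j)" for i j
    using bounded_linear.sums[OF bounded_linear_vec_nth,
        OF bounded_linear.sums[OF bounded_linear_vec_nth, OF series]] by simp
  note pow = mat_pow_upper_triangular2[OF assms]
  have "mat_exp M $2$1 = 0"
    using sums_unique[OF entry[of 2 1]] by (simp add: pow)
  moreover have "mat_exp M $ i $ i = exp (M $ i $ i)" if "i = 1 \<or> i = 2" for i
  proof -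
    have "(\<lambda>n. (1 / fact n) *\<^sub>R mat_pow M n $ i $ i) = (\<lambda>n. (M $ i $ i)^n /\<^sub>R fact n)"
      using that by (auto simp: pow divide_inverse)
    with entry[of i i] show ?thesis by (metis exp_converges sums_unique2)
  qed
  ultimately show ?thesis by (simp add: det_2 trace_def UNIV_2 exp_add)
qed

lemma norm_axis_one: "norm (axis j (1::'a::real_normed_algebra_1)) = 1"
  unfolding norm_vec_def L2_set_def axis_def
  by (simp add: if_distrib[of "\<lambda>x. (norm x)\<^sup>2"] cong: if_cong)

lemma spectral_norm_nonneg: "0 \<le> spectral_norm M"
  unfolding spectral_norm_def by (rule onorm_pos_le[OF matrix_vector_mul_bounded_linear])

lemma cmod_det_le_spectral_norm_sq: "cmod (det (M::complex^2^2)) \<le> (spectral_norm M)^2"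
proof -
  have column_le: "norm (M *v axis j 1) \<le> spectral_norm M" for j
    using onorm[OF matrix_vector_mul_bounded_linear, of M "axis j 1"]
    by (simp add: spectral_norm_def norm_axis_one)
  have column: "M *v axis j 1 = (\<chi> i. M$i$j)" for j
    by (simp add: matrix_vector_mult_def axis_def vec_eq_iff if_distrib cong: if_cong)
  have column_norm: "norm (M *v axis j 1) = sqrt ((cmod (M$1$j))^2 + (cmod (M$2$j))^2)" for j
    unfolding column norm_vec_def L2_set_def by (simp add: UNIV_2)
  \<comment> \<open>Hadamard's inequality: \<open>|det M|\<close> is at most the product of the column norms.\<close>
  define p q r s where "p = cmod (M$1$1)" and "q = cmod (M$1$2)"
    and "r = cmod (M$2$1)" and "s = cmod (M$2$2)"
  have "cmod (det M) \<le> p * s + q * r"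
    using norm_triangle_ineq4[of "M$1$1 * M$2$2" "M$1$2 * M$2$1"]
    unfolding det_2 p_def q_def r_def s_def by (simp add: norm_mult)
  also have "\<dots> \<le> sqrt ((p^2 + r^2) * (q^2 + s^2))"
  proof (rule real_le_rsqrt)
    have "(p^2 + r^2) * (q^2 + s^2) = (p * s + q * r)^2 + (p * q - r * s)^2"
      by (simp add: power2_eq_square algebra_simps)
    then show "(p * s + q * r)^2 \<le> (p^2 + r^2) * (q^2 + s^2)" by simp
  qed
  also have "\<dots> = norm (M *v axis 1 1) * norm (M *v axis 2 1)"
    unfolding column_norm p_def q_def r_def s_def by (simp add: real_sqrt_mult)
  also have "\<dots> \<le> (spectral_norm M)^2"
    unfolding power2_eq_square by (intro mult_mono column_le norm_ge_zero spectral_norm_nonneg)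
  finally show ?thesis .
qed

lemma cmod_det_lt_1_if_spectral_norm_lt_1:
  fixes M :: "complex^2^2"
  assumes "spectral_norm M < 1"
  shows "cmod (det M) < 1"
proof -
  have "(spectral_norm M)^2 < 1"
    using assms spectral_norm_nonneg[of M] by (simp add: power_less_one_iff)
  then show ?thesis using cmod_det_le_spectral_norm_sq[of M] by linarith
qed

lemma matrix_inv_left:
  fixes P :: "'a::semiring_1^'n^'n"
  assumes "invertible P"
  shows "matrix_inv P ** P = mat 1"
  using someI_ex[OF assms[unfolded invertible_def]] unfolding matrix_inv_def by blast

lemma trace_similar:
  fixes P J :: "'a::comm_semiring_1^'n^'n"
  assumes "invertible P"
  shows "trace (P ** J ** matrix_inv P) = trace J"
  using trace_mul_sym[of "P ** J" "matrix_inv P"]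
  by (simp add: matrix_mul_assoc matrix_inv_left[OF assms])

lemma trace_cmat: "trace (cmat (A::real^'n^'n)) = complex_of_real (trace A)"
  by (simp add: trace_def cmat_def)

lemma jordan_matrix2_lower_left: "jordan_matrix2 J \<Longrightarrow> J$2$1 = 0"
  unfolding jordan_matrix2_def by auto

lemma cmod_det_lt_along_edge:
  fixes A :: "real^2^2" and Pr Ps Jr :: "complex^2^2"
  assumes "invertible Pr" "invertible Ps" "jordan_matrix2 Jr"
    and decomp: "cmat A = Pr ** Jr ** matrix_inv Pr"
    and "\<eta> > 0" and contr: "spectral_norm (matrix_inv Ps ** Pr ** mat_exp (\<eta> *\<^sub>R Jr)) < 1"
    and "trace A \<ge> 0"
  shows "cmod (det Pr) < cmod (det Ps)"
proof -
  let ?E = "mat_exp (\<eta> *\<^sub>R Jr)"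
  have "trace Jr = complex_of_real (trace A)"
    using trace_similar[OF assms(1), of Jr] by (simp add: decomp[symmetric] trace_cmat)
  moreover have "det ?E = exp (trace (\<eta> *\<^sub>R Jr))"
    using jordan_matrix2_lower_left[OF assms(3)] by (simp add: det_mat_exp_upper_triangular2)
  moreover have "trace (\<eta> *\<^sub>R Jr) = \<eta> *\<^sub>R trace Jr"
    by (simp add: trace_def scaleR_sum_right)
  ultimately have "det ?E = exp (complex_of_real (\<eta> * trace A))"
    by (simp add: scaleR_conv_of_real)
  then have exp_ge_1: "1 \<le> cmod (det ?E)"
    using \<open>\<eta> > 0\<close> \<open>trace A \<ge> 0\<close> by simp
  have "det Ps \<noteq> 0" using assms(2) invertible_det_nz by blast
  have "det (matrix_inv Ps ** Pr ** ?E) * det Ps = det Pr * det ?E"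
    using arg_cong[OF matrix_inv_left[OF assms(2)], of det] by (simp add: det_mul)
  then have "cmod (det (matrix_inv Ps ** Pr ** ?E)) * cmod (det Ps) = cmod (det Pr) * cmod (det ?E)"
    by (metis norm_mult)
  moreover have "cmod (det (matrix_inv Ps ** Pr ** ?E)) * cmod (det Ps) < cmod (det Ps)"
    using cmod_det_lt_1_if_spectral_norm_lt_1[OF contr] \<open>det Ps \<noteq> 0\<close> by simp
  moreover have "cmod (det Pr) \<le> cmod (det Pr) * cmod (det ?E)"
    using exp_ge_1 by (simp add: mult_le_cancel_left1)
  ultimately show ?thesis by linarith
qed

lemma cyclic_not_strictly_increasing:
  fixes f :: "nat \<Rightarrow> 'a::linorder"
  assumes "0 < p"
  shows "\<exists>j<p. \<not> f j < f ((j + 1) mod p)"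
proof -
  have "Max (f ` {..<p}) \<in> f ` {..<p}"
    using assms by (intro Max_in) auto
  then obtain j where "j < p" and max: "f j = Max (f ` {..<p})"
    by auto
  have "f ((j + 1) mod p) \<le> f j"
    unfolding max using assms by simp
  then show ?thesis using \<open>j < p\<close> by (auto simp: not_less)
qed

theorem proposition3p3:
  fixes k :: nat
    and E :: "(nat \<times> nat) set"
    and A :: "nat \<Rightarrow> real^2^2"
    and P J :: "nat \<Rightarrow> complex^2^2"
  assumes edges: "E \<subseteq> {..<k} \<times> {..<k}"
    and no_self_loops: "\<forall>i. (i, i) \<notin> E"
    and P_inv: "\<forall>i<k. invertible (P i)"
    and J_jordan: "\<forall>i<k. jordan_matrix2 (J i)"
    and decomp: "\<forall>i<k. cmat (A i) = P i ** J i ** matrix_inv (P i)"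
    and contr: "\<forall>(r, s)\<in>E. \<exists>\<eta>>0.
                  spectral_norm (matrix_inv (P s) ** P r ** mat_exp (\<eta> *\<^sub>R J r)) < 1"
    and loop: "is_loop E is"
  shows "\<exists>j<length is. trace (A (is ! j)) < 0"
proof (rule ccontr)
  assume no_negative_trace: "\<not> ?thesis"
  let ?p = "length is"
  let ?f = "\<lambda>j. cmod (det (P (is ! j)))"
  have "0 < ?p" using loop by (simp add: is_loop_def)
  then obtain j where j: "j < ?p" and not_increasing: "\<not> ?f j < ?f ((j + 1) mod ?p)"
    using cyclic_not_strictly_increasing[of ?p ?f] by blast
  let ?r = "is ! j" and ?s = "is ! ((j + 1) mod ?p)"
  have edge: "(?r, ?s) \<in> E" using loop j unfolding is_loop_def by blast
  with edges have "?r < k" "?s < k" by auto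
  obtain \<eta> where "\<eta> > 0" "spectral_norm (matrix_inv (P ?s) ** P ?r ** mat_exp (\<eta> *\<^sub>R J ?r)) < 1"
    using contr edge by fastforce
  moreover have "trace (A ?r) \<ge> 0" using no_negative_trace j not_less by blast
  ultimately have "?f j < ?f ((j + 1) mod ?p)"
    using cmod_det_lt_along_edge \<open>?r < k\<close> \<open>?s < k\<close> P_inv J_jordan decomp by blast
  with not_increasing show False ..
qed

end
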